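(* Let $\Omega\subset\mathbb{R}^n$ be a bounded domain with smooth boundary, let $a,b,c,m,d_1,d_2>0$, and let $k:\Omega\to\mathbb{R}$ satisfy $k\in C^1(\Omega)$, $k\ge0$, and $k$ does not vanish identically on any subset (or finite union of subsets) of $\Omega$ of positive measure. Consider $$u_t=d_1\Delta u+bu(1-u-cv),\qquad v_t=d_2\Delta v+v\Big(\frac{1}{1+k(x)u}-v-au-muv\Big)\quad\text{in }\Omega,$$ with homogeneous Neumann boundary conditions and spatially homogeneous positive initial data $u(x,0)\equiv u_0>0$, $v(x,0)\equiv v_0>0$. If $\widehat{k}:=\min_{x\in\Omega}k(x)>\frac1a-1$, then there exist such spatially homogeneous initial data for which the solution $(u,v)$ converges uniformly to the spatially homogeneous state $(1,0)$ as $t\to\infty$. *)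

theory Defs
  imports "HOL-Analysis.Analysis"
begin

definition pd :: "'n::finite \<Rightarrow> (real^'n \<Rightarrow> real) \<Rightarrow> real^'n \<Rightarrow> real" where
  "pd i f x = deriv (\<lambda>h. f (x + h *\<^sub>R axis i 1)) 0"

fun pdl :: "'n::finite list \<Rightarrow> (real^'n \<Rightarrow> real) \<Rightarrow> real^'n \<Rightarrow> real" where
  "pdl [] f = f"
| "pdl (i # is) f = pd i (pdl is f)"

definition grad :: "(real^'n::finite \<Rightarrow> real) \<Rightarrow> real^'n \<Rightarrow> real^'n" where
  "grad f x = (\<chi> i. pd i f x)"

definition smooth_on :: "(real^'n::finite) set \<Rightarrow> (real^'n \<Rightarrow> real) \<Rightarrow> bool" where
  "smooth_on U f \<longleftrightarrow>
     (\<forall>is. continuous_on U (pdl is f) \<and>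
        (\<forall>i. \<forall>x\<in>U. (\<lambda>h. pdl is f (x + h *\<^sub>R axis i 1)) differentiable (at 0)))"

definition smooth_defining_function :: "(real^'n::finite) set \<Rightarrow> (real^'n \<Rightarrow> real) \<Rightarrow> bool" where
  "smooth_defining_function \<Omega> \<rho> \<longleftrightarrow>
     smooth_on UNIV \<rho> \<and> \<Omega> = {x. \<rho> x < 0} \<and> (\<forall>x. \<rho> x = 0 \<longrightarrow> grad \<rho> x \<noteq> 0)"

definition smooth_bounded_domain :: "(real^'n::finite) set \<Rightarrow> bool" where
  "smooth_bounded_domain \<Omega> \<longleftrightarrow> open \<Omega> \<and> connected \<Omega> \<and> \<Omega> \<noteq> {} \<and> bounded \<Omega> \<and>
     (\<exists>\<rho>. smooth_defining_function \<Omega> \<rho>)"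

text \<open>Outward unit normal at boundary points (independent of the chosen defining function).\<close>
definition outer_normal :: "(real^'n::finite) set \<Rightarrow> real^'n \<Rightarrow> real^'n" where
  "outer_normal \<Omega> x =
     (let \<rho> = (SOME \<rho>. smooth_defining_function \<Omega> \<rho>) in sgn (grad \<rho> x))"

definition pdx :: "'n::finite \<Rightarrow> (real^'n \<Rightarrow> real \<Rightarrow> real) \<Rightarrow> real^'n \<Rightarrow> real \<Rightarrow> real" where
  "pdx i u x t = deriv (\<lambda>h. u (x + h *\<^sub>R axis i 1) t) 0"

definition pdt :: "(real^'n::finite \<Rightarrow> real \<Rightarrow> real) \<Rightarrow> real^'n \<Rightarrow> real \<Rightarrow> real" where
  "pdt u x t = deriv (u x) t"

definition laplacian :: "(real^'n::finite \<Rightarrow> real \<Rightarrow> real) \<Rightarrow> real^'n \<Rightarrow> real \<Rightarrow> real" where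
  "laplacian u x t = (\<Sum>i\<in>UNIV. pdx i (pdx i u) x t)"

text \<open>Classical regularity: u in C(closure Omega x [0,oo)) \<inter> C^{2,1}(Omega x (0,oo)),
  with gradient continuous up to the boundary for t > 0, and
  homogeneous Neumann boundary condition.\<close>
definition classical_neumann :: "(real^'n::finite) set \<Rightarrow> (real^'n \<Rightarrow> real \<Rightarrow> real) \<Rightarrow> bool" where
  "classical_neumann \<Omega> u \<longleftrightarrow>
     continuous_on (closure \<Omega> \<times> {0..}) (\<lambda>p. u (fst p) (snd p)) \<and>
     (\<forall>x\<in>\<Omega>. \<forall>t>0. u x differentiable (at t)) \<and>
     continuous_on (\<Omega> \<times> {0<..}) (\<lambda>p. pdt u (fst p) (snd p)) \<and>
     (\<forall>i. \<forall>x\<in>\<Omega>. \<forall>t>0. (\<lambda>h. u (x + h *\<^sub>R axis i 1) t) differentiable (at 0)) \<and>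
     (\<forall>i j. \<forall>x\<in>\<Omega>. \<forall>t>0. (\<lambda>h. pdx i u (x + h *\<^sub>R axis j 1) t) differentiable (at 0)) \<and>
     (\<forall>i j. continuous_on (\<Omega> \<times> {0<..}) (\<lambda>p. pdx j (pdx i u) (fst p) (snd p))) \<and>
     (\<exists>Du :: real^'n \<Rightarrow> real \<Rightarrow> real^'n.
        continuous_on (closure \<Omega> \<times> {0<..}) (\<lambda>p. Du (fst p) (snd p)) \<and>
        (\<forall>x\<in>closure \<Omega>. \<forall>t>0.
            ((\<lambda>y. u y t) has_derivative (\<lambda>h. Du x t \<bullet> h)) (at x within closure \<Omega>)) \<and>
        (\<forall>x\<in>frontier \<Omega>. \<forall>t>0. Du x t \<bullet> outer_normal \<Omega> x = 0))"

definition is_solution ::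
  "(real^'n::finite) set \<Rightarrow> real \<Rightarrow> real \<Rightarrow> real \<Rightarrow> real \<Rightarrow> real \<Rightarrow> real \<Rightarrow>
   (real^'n \<Rightarrow> real) \<Rightarrow> real \<Rightarrow> real \<Rightarrow>
   (real^'n \<Rightarrow> real \<Rightarrow> real) \<Rightarrow> (real^'n \<Rightarrow> real \<Rightarrow> real) \<Rightarrow> bool" where
  "is_solution \<Omega> a b c m d1 d2 k u0 v0 u v \<longleftrightarrow>
     classical_neumann \<Omega> u \<and> classical_neumann \<Omega> v \<and>
     (\<forall>x\<in>closure \<Omega>. u x 0 = u0 \<and> v x 0 = v0) \<and>
     (\<forall>x\<in>\<Omega>. \<forall>t>0.
        pdt u x t = d1 * laplacian u x t + b * u x t * (1 - u x t - c * v x t) \<and>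
        pdt v x t = d2 * laplacian v x t
          + v x t * (1 / (1 + k x * u x t) - v x t - a * u x t - m * u x t * v x t))"

end

theory Submission
  imports Defs
begin

text \<open>
  Starting from the constant data \<open>u = 1\<close>, \<open>v = B / 2\<close>, the solution is trapped between the
  shrinking barriers \<open>\<bar>u - 1\<bar> \<le> A exp (-\<sigma> t) + \<epsilon> (\<rho> + M)\<close> and
  \<open>\<bar>v\<bar> \<le> B exp (-\<sigma> t) + \<epsilon> (\<rho> + M)\<close>, where \<open>\<rho>\<close> is the defining function of \<open>\<Omega>\<close> and
  \<open>M\<close> bounds \<open>\<bar>\<rho>\<bar>\<close> and \<open>\<bar>\<Delta>\<rho>\<bar>\<close> on the closure. A first contact with a barrier cannot happen on
  the boundary: there the Neumann condition kills the normal derivative of the solution, while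
  \<open>\<rho>\<close> strictly decreases towards the interior. At an interior contact point the time derivative
  and the Laplacian have the signs of a minimum, which the reaction terms contradict; for \<open>v\<close>
  this uses \<open>k \<ge> inf k > 1/a - 1\<close>, so that \<open>1 / (1 + k u) - a u \<le> -3\<delta>/4\<close> while \<open>u\<close> stays
  near \<open>1\<close>. Since \<open>\<epsilon>\<close> may be taken proportional to \<open>exp (-\<sigma> T)\<close> for every horizon \<open>T\<close>,
  the solution converges exponentially to \<open>(1, 0)\<close>.
\<close>

section \<open>Partial derivatives and defining functions\<close>

definition pd_laplacian :: "(real^'n::finite \<Rightarrow> real) \<Rightarrow> real^'n \<Rightarrow> real" where
  "pd_laplacian f x = (\<Sum>i\<in>UNIV. pd i (pd i f) x)"

lemma laplacian_eq_pd_laplacian: "laplacian u x t = pd_laplacian (\<lambda>y. u y t) x"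
  by (simp add: laplacian_def pd_laplacian_def pdx_def pd_def)

lemma has_real_derivative_pd:
  assumes "(\<lambda>h. f (y + h *\<^sub>R axis i 1)) differentiable (at 0)"
  shows "((\<lambda>s. f (y + s *\<^sub>R axis i 1)) has_real_derivative pd i f y) (at 0)"
  using assms unfolding pd_def by (simp add: DERIV_deriv_iff_real_differentiable)

lemma has_real_derivative_pd_on_line:
  assumes "(\<lambda>h. f ((y + s *\<^sub>R axis i 1) + h *\<^sub>R axis i 1)) differentiable (at 0)"
  shows "((\<lambda>s. f (y + s *\<^sub>R axis i 1)) has_real_derivative pd i f (y + s *\<^sub>R axis i 1)) (at s)"
proof -
  have "((\<lambda>h. f (y + (h + s) *\<^sub>R axis i 1)) has_real_derivative pd i f (y + s *\<^sub>R axis i 1)) (at 0)"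
    using has_real_derivative_pd[OF assms] by (simp add: scaleR_add_left algebra_simps)
  then show ?thesis
    using DERIV_shift[of "\<lambda>s. f (y + s *\<^sub>R axis i 1)" _ 0 s] by simp
qed

lemma pd_increment_bound:
  fixes f :: "real^'n::finite \<Rightarrow> real"
  assumes diff: "\<And>y. (\<lambda>h. f (y + h *\<^sub>R axis j 1)) differentiable (at 0)"
    and close: "\<And>\<xi>. \<xi> \<in> closed_segment 0 t \<Longrightarrow> \<bar>pd j f (z + \<xi> *\<^sub>R axis j 1) - c\<bar> \<le> e"
  shows "\<bar>f (z + t *\<^sub>R axis j 1) - f z - t * c\<bar> \<le> e * \<bar>t\<bar>"
proof -
  define g where "g \<xi> = f (z + \<xi> *\<^sub>R axis j 1) - \<xi> * c" for \<xi>
  have "(g has_real_derivative pd j f (z + \<xi> *\<^sub>R axis j 1) - c) (at \<xi>)" for \<xi>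
    unfolding g_def
    using has_real_derivative_pd_on_line[OF diff, of z \<xi>] by (auto intro!: derivative_eq_intros)
  then have "norm (g t - g 0) \<le> e * norm (t - 0)"
    by (intro field_differentiable_bound[OF convex_closed_segment has_field_derivative_at_within])
       (use close in auto)
  then show ?thesis by (simp add: g_def)
qed

lemma pd_coordinate_step:
  fixes f :: "real^'n::finite \<Rightarrow> real"
  assumes diff: "\<And>y. (\<lambda>h. f (y + h *\<^sub>R axis j 1)) differentiable (at 0)"
    and near: "\<And>y. dist y x < d \<Longrightarrow> \<bar>pd j f y - pd j f x\<bar> \<le> e"
    and "norm h < d"
  shows "\<bar>f (x + h) - f (x + (\<chi> i. if i = j then 0 else h$i)) - h$j * pd j f x\<bar> \<le> e * \<bar>h$j\<bar>"
proof -
  define h' where "h' = (\<chi> i. if i = j then 0 else h$i)"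
  have split: "x + h = (x + h') + h$j *\<^sub>R axis j 1"
    by (simp add: vec_eq_iff h'_def axis_def)
  have "\<bar>pd j f ((x + h') + \<xi> *\<^sub>R axis j 1) - pd j f x\<bar> \<le> e"
    if "\<xi> \<in> closed_segment 0 (h$j)" for \<xi>
  proof -
    have "\<bar>\<xi>\<bar> \<le> \<bar>h$j\<bar>"
      using that by (auto simp: closed_segment_eq_real_ivl split: if_splits)
    then have "norm (h' + \<xi> *\<^sub>R axis j 1) \<le> norm h"
      by (intro norm_le_componentwise_cart) (auto simp: h'_def axis_def)
    then show ?thesis
      using near[of "(x + h') + \<xi> *\<^sub>R axis j 1"] \<open>norm h < d\<close> by (simp add: dist_norm)
  qed
  from pd_increment_bound[OF diff this] show ?thesis
    unfolding split h'_def .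
qed

lemma pd_partial_linearization:
  fixes f :: "real^'n::finite \<Rightarrow> real"
  assumes diff: "\<And>i y. (\<lambda>h. f (y + h *\<^sub>R axis i 1)) differentiable (at 0)"
    and cont: "\<And>i. isCont (pd i f) x"
    and "finite J" and "e > 0"
  shows "\<exists>d>0. \<forall>h. (\<forall>i. i \<notin> J \<longrightarrow> h$i = 0) \<and> norm h < d \<longrightarrow>
           \<bar>f (x + h) - f x - (\<Sum>j\<in>J. h$j * pd j f x)\<bar> \<le> e * (\<Sum>j\<in>J. \<bar>h$j\<bar>)"
  using \<open>finite J\<close>
proof (induction J rule: finite_induct)
  case empty
  have "f (x + h) = f x" if "\<forall>i. h$i = 0" for h :: "real^'n"
  proof -
    have "h = 0" using that by (simp add: vec_eq_iff)
    then show ?thesis by simp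
  qed
  then show ?case by (intro exI[of _ 1]) auto
next
  case (insert j J)
  from insert.IH obtain d1 where "d1 > 0" and d1:
    "\<And>h. (\<forall>i. i \<notin> J \<longrightarrow> h$i = 0) \<Longrightarrow> norm h < d1 \<Longrightarrow>
       \<bar>f (x + h) - f x - (\<Sum>j\<in>J. h$j * pd j f x)\<bar> \<le> e * (\<Sum>j\<in>J. \<bar>h$j\<bar>)"
    by blast
  from cont[of j] \<open>e > 0\<close> obtain d2 where "d2 > 0" and d2:
    "\<And>y. dist y x < d2 \<Longrightarrow> \<bar>pd j f y - pd j f x\<bar> \<le> e"
    unfolding continuous_at_eps_delta dist_real_def by (meson less_imp_le)
  have "\<bar>f (x + h) - f x - (\<Sum>i\<in>insert j J. h$i * pd i f x)\<bar> \<le> e * (\<Sum>i\<in>insert j J. \<bar>h$i\<bar>)"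
    if h: "\<forall>i. i \<notin> insert j J \<longrightarrow> h$i = 0" "norm h < min d1 d2" for h
  proof -
    define h' where "h' = (\<chi> i. if i = j then 0 else h$i)"
    have "norm h' \<le> norm h"
      by (rule norm_le_componentwise_cart) (simp add: h'_def)
    moreover have "(\<Sum>i\<in>J. h'$i * pd i f x) = (\<Sum>i\<in>J. h$i * pd i f x)"
      "(\<Sum>i\<in>J. \<bar>h'$i\<bar>) = (\<Sum>i\<in>J. \<bar>h$i\<bar>)"
      using insert.hyps by (auto intro!: sum.cong simp: h'_def)
    ultimately have rest: "\<bar>f (x + h') - f x - (\<Sum>i\<in>J. h$i * pd i f x)\<bar> \<le> e * (\<Sum>i\<in>J. \<bar>h$i\<bar>)"
      using d1[of h'] h by (simp add: h'_def)
    have "norm h < d2"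
      using h(2) by simp
    with pd_coordinate_step[of f j x d2 e h] diff d2
    have step: "\<bar>f (x + h) - f (x + h') - h$j * pd j f x\<bar> \<le> e * \<bar>h$j\<bar>"
      unfolding h'_def by blast
    show ?thesis
      using rest step insert.hyps by (simp add: algebra_simps)
  qed
  then show ?case
    using \<open>d1 > 0\<close> \<open>d2 > 0\<close> by (intro exI[of _ "min d1 d2"]) auto
qed

lemma has_derivative_grad_of_continuous_pd:
  fixes f :: "real^'n::finite \<Rightarrow> real"
  assumes diff: "\<And>i y. (\<lambda>h. f (y + h *\<^sub>R axis i 1)) differentiable (at 0)"
    and cont: "\<And>i. isCont (pd i f) x"
  shows "(f has_derivative (\<lambda>h. grad f x \<bullet> h)) (at x)"
  unfolding has_derivative_at_alt
proof (intro conjI allI impI bounded_linear_inner_right)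
  fix e :: real assume "e > 0"
  then obtain d where "d > 0" and d: "\<And>h. norm h < d \<Longrightarrow>
      \<bar>f (x + h) - f x - (\<Sum>j\<in>UNIV. h$j * pd j f x)\<bar> \<le> e / CARD('n) * (\<Sum>j\<in>UNIV. \<bar>h$j\<bar>)"
    using pd_partial_linearization[OF diff cont, of UNIV "e / CARD('n)"] by auto
  have "norm (f y - f x - grad f x \<bullet> (y - x)) \<le> e * norm (y - x)" if "norm (y - x) < d" for y
  proof -
    have "(\<Sum>j\<in>UNIV. \<bar>(y - x)$j\<bar>) \<le> (\<Sum>j\<in>(UNIV::'n set). norm (y - x))"
      by (intro sum_mono component_le_norm_cart)
    then have "(\<Sum>j\<in>UNIV. \<bar>(y - x)$j\<bar>) \<le> CARD('n) * norm (y - x)"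
      by simp
    then have "e / CARD('n) * (\<Sum>j\<in>UNIV. \<bar>(y - x)$j\<bar>) \<le> e * norm (y - x)"
      using \<open>e > 0\<close> by (simp add: field_simps)
    then show ?thesis
      using d[OF that] by (simp add: inner_vec_def grad_def mult.commute)
  qed
  then show "\<exists>d>0. \<forall>y. norm (y - x) < d \<longrightarrow> norm (f y - f x - grad f x \<bullet> (y - x)) \<le> e * norm (y - x)"
    using \<open>d > 0\<close> by blast
qed

lemma smooth_defining_function_open:
  assumes "smooth_defining_function \<Omega> \<rho>"
  shows "open \<Omega>"
proof -
  have "continuous_on UNIV (pdl [] \<rho>)"
    using assms unfolding smooth_defining_function_def smooth_on_def by blast
  then show ?thesis
    using assms open_Collect_less[of \<rho> "\<lambda>_. 0"] unfolding smooth_defining_function_def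
    by (simp add: continuous_on_const)
qed

lemma smooth_on_UNIV_has_derivative_grad:
  assumes "smooth_on UNIV f"
  shows "(f has_derivative (\<lambda>h. grad f x \<bullet> h)) (at x)"
proof (rule has_derivative_grad_of_continuous_pd)
  show "(\<lambda>h. f (y + h *\<^sub>R axis i 1)) differentiable (at 0)" for i y
    using assms unfolding smooth_on_def by (metis UNIV_I pdl.simps(1))
  show "isCont (pd i f) x" for i
  proof -
    have "continuous_on UNIV (pdl [i] f)"
      using assms unfolding smooth_on_def by blast
    then show ?thesis by (simp add: continuous_on_eq_continuous_at)
  qed
qed

lemma has_real_derivative_directional:
  assumes F: "(F has_derivative (\<lambda>h. G \<bullet> h)) (at x within S)"
    and ray: "\<And>r. r \<in> T \<Longrightarrow> x + r *\<^sub>R v \<in> S"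
  shows "((\<lambda>r. F (x + r *\<^sub>R v)) has_real_derivative G \<bullet> v) (at 0 within T)"
proof -
  have "((\<lambda>r. x + r *\<^sub>R v) has_derivative (\<lambda>r. r *\<^sub>R v)) (at 0 within T)"
    by (auto intro!: derivative_eq_intros)
  moreover have "(F has_derivative (\<lambda>h. G \<bullet> h)) (at (x + 0 *\<^sub>R v) within (\<lambda>r. x + r *\<^sub>R v) ` T)"
    using has_derivative_subset[OF F, of "(\<lambda>r. x + r *\<^sub>R v) ` T"] ray by auto
  ultimately have "((\<lambda>r. F (x + r *\<^sub>R v)) has_derivative (\<lambda>r. G \<bullet> (r *\<^sub>R v))) (at 0 within T)"
    by (rule has_derivative_in_compose)
  then show ?thesis
    by (rule has_derivative_imp_has_field_derivative) simp
qed

lemma defining_function_bounded_on_closure: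
  fixes \<Omega> :: "(real^'n::finite) set"
  assumes "bounded \<Omega>" and "smooth_defining_function \<Omega> \<rho>"
  obtains M where "\<And>x. x \<in> closure \<Omega> \<Longrightarrow> \<bar>\<rho> x\<bar> \<le> M \<and> \<bar>pd_laplacian \<rho> x\<bar> \<le> M"
proof -
  have cont: "continuous_on UNIV (pdl js \<rho>)" for js
    using assms(2) by (simp add: smooth_defining_function_def smooth_on_def)
  then have \<rho>_cont: "continuous_on UNIV \<rho>" "continuous_on UNIV (pd i (pd i \<rho>))" for i
    using cont[of "[]"] cont[of "[i, i]"] by simp_all
  have "compact (closure \<Omega>)"
    using assms(1) by (simp add: compact_closure)
  then have "bounded (\<rho> ` closure \<Omega>)" "bounded (pd_laplacian \<rho> ` closure \<Omega>)"
    unfolding pd_laplacian_def using \<rho>_cont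
    by (auto intro!: compact_imp_bounded compact_continuous_image continuous_on_sum
        intro: continuous_on_subset)
  then obtain M1 M2 where "\<forall>y\<in>\<rho> ` closure \<Omega>. \<bar>y\<bar> \<le> M1" "\<forall>y\<in>pd_laplacian \<rho> ` closure \<Omega>. \<bar>y\<bar> \<le> M2"
    unfolding bounded_real by blast
  then show ?thesis
    using that[of "max M1 M2"] by fastforce
qed

lemma smooth_bounded_domain_defining_function:
  assumes "smooth_bounded_domain \<Omega>"
  shows "smooth_defining_function \<Omega> (SOME \<rho>. smooth_defining_function \<Omega> \<rho>)"
  using assms someI_ex[of "smooth_defining_function \<Omega>"]
  unfolding smooth_bounded_domain_def by blast

section \<open>First contact with a barrier\<close>

lemma defining_function_frontier:
  fixes \<Omega> :: "(real^'n::finite) set"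
  assumes sdf: "smooth_defining_function \<Omega> \<rho>" and xs: "xs \<in> frontier \<Omega>"
  shows "xs \<in> closure \<Omega>" and "grad \<rho> xs \<noteq> 0"
    and "\<exists>d>0. \<forall>r. 0 < r \<and> r < d \<longrightarrow> xs + r *\<^sub>R - grad \<rho> xs \<in> \<Omega>"
proof -
  have \<Omega>: "\<Omega> = {x. \<rho> x < 0}" and sm: "smooth_on UNIV \<rho>"
    using sdf by (auto simp: smooth_defining_function_def)
  have "continuous_on UNIV (pdl [] \<rho>)"
    using sm unfolding smooth_on_def by blast
  then have "closure \<Omega> \<subseteq> {x. \<rho> x \<le> 0}"
    by (intro closure_minimal) (auto simp: \<Omega> intro!: closed_Collect_le continuous_on_const)
  moreover show "xs \<in> closure \<Omega>"
    using xs by (simp add: frontier_def)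
  moreover have "xs \<notin> \<Omega>"
    using xs smooth_defining_function_open[OF sdf] by (simp add: frontier_def interior_open)
  ultimately have "\<rho> xs = 0"
    using \<Omega> by auto
  then show "grad \<rho> xs \<noteq> 0"
    using sdf by (simp add: smooth_defining_function_def)
  define g where "g = grad \<rho> xs"
  have "((\<lambda>r. \<rho> (xs + r *\<^sub>R - g)) has_real_derivative g \<bullet> - g) (at 0)"
    unfolding g_def
    by (rule has_real_derivative_directional[OF smooth_on_UNIV_has_derivative_grad[OF sm]]) simp
  from DERIV_neg_dec_right[OF this] \<open>grad \<rho> xs \<noteq> 0\<close> obtain d where "d > 0"
    and "\<forall>r>0. r < d \<longrightarrow> \<rho> (xs + (0 + r) *\<^sub>R - g) < \<rho> (xs + 0 *\<^sub>R - g)"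
    by (auto simp: g_def)
  then show "\<exists>d>0. \<forall>r. 0 < r \<and> r < d \<longrightarrow> xs + r *\<^sub>R - grad \<rho> xs \<in> \<Omega>"
    using \<open>\<rho> xs = 0\<close> \<Omega> by (auto simp: g_def)
qed

(* Walking from xs along - grad \<rho> xs enters \<Omega>, and f + \<epsilon> \<rho> decreases to first order
   because D is tangential. *)
lemma defining_function_boundary_not_min:
  fixes \<Omega> :: "(real^'n::finite) set"
  assumes sdf: "smooth_defining_function \<Omega> \<rho>" and xs: "xs \<in> frontier \<Omega>"
    and f: "(f has_derivative (\<lambda>h. D \<bullet> h)) (at xs within closure \<Omega>)"
    and tangential: "D \<bullet> grad \<rho> xs = 0" and "\<epsilon> > 0"
  shows "\<exists>y\<in>\<Omega>. f y + \<epsilon> * \<rho> y < f xs + \<epsilon> * \<rho> xs"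
proof -
  define g where "g = grad \<rho> xs"
  obtain d1 where "d1 > 0" and inside: "\<And>r. 0 < r \<Longrightarrow> r < d1 \<Longrightarrow> xs + r *\<^sub>R - g \<in> \<Omega>"
    using defining_function_frontier(3)[OF sdf xs] by (auto simp: g_def)
  have \<rho>': "(\<rho> has_derivative (\<lambda>h. g \<bullet> h)) (at xs)"
    using sdf unfolding g_def smooth_defining_function_def
    by (blast intro: smooth_on_UNIV_has_derivative_grad)
  have "((\<lambda>y. f y + \<epsilon> * \<rho> y) has_derivative (\<lambda>h. (D + \<epsilon> *\<^sub>R g) \<bullet> h)) (at xs within closure \<Omega>)"
    using f has_derivative_at_withinI[OF \<rho>']
    by (auto intro!: derivative_eq_intros simp: inner_add_left)
  moreover have "xs + r *\<^sub>R - g \<in> closure \<Omega>" if "r \<in> {0..<d1}" for r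
    using that defining_function_frontier(1)[OF sdf xs] inside[of r] closure_subset
    by (cases "r = 0") auto
  ultimately have "((\<lambda>r. f (xs + r *\<^sub>R - g) + \<epsilon> * \<rho> (xs + r *\<^sub>R - g))
      has_real_derivative (D + \<epsilon> *\<^sub>R g) \<bullet> - g) (at 0 within {0..<d1})"
    by (rule has_real_derivative_directional)
  moreover have "(D + \<epsilon> *\<^sub>R g) \<bullet> - g < 0"
    using tangential defining_function_frontier(2)[OF sdf xs] \<open>\<epsilon> > 0\<close>
    by (simp add: g_def inner_add_left)
  ultimately obtain d2 where "d2 > 0" and d2: "\<forall>r>0. 0 + r \<in> {0..<d1} \<longrightarrow> r < d2 \<longrightarrow>
      f (xs + (0 + r) *\<^sub>R - g) + \<epsilon> * \<rho> (xs + (0 + r) *\<^sub>R - g)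
        < f (xs + 0 *\<^sub>R - g) + \<epsilon> * \<rho> (xs + 0 *\<^sub>R - g)"
    by (blast dest: has_real_derivative_neg_dec_right)
  define r where "r = min d1 d2 / 2"
  have "0 < r" "r < d1" "r < d2" using \<open>d1 > 0\<close> \<open>d2 > 0\<close> by (auto simp: r_def)
  then show ?thesis
    using inside[of r] d2 by auto
qed

lemma DERIV_left_min_nonpos:
  fixes f :: "real \<Rightarrow> real"
  assumes "(f has_real_derivative D) (at t)" and "a < t"
    and "\<And>s. a \<le> s \<Longrightarrow> s \<le> t \<Longrightarrow> f t \<le> f s"
  shows "D \<le> 0"
proof (rule ccontr)
  assume "\<not> D \<le> 0"
  with DERIV_pos_inc_left[OF assms(1)] obtain d where "d > 0"
    and d: "\<And>h. h > 0 \<Longrightarrow> h < d \<Longrightarrow> f (t - h) < f t" by auto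
  define h where "h = min d (t - a) / 2"
  have "h > 0" "h < d" "a \<le> t - h" using \<open>d > 0\<close> \<open>a < t\<close> by (auto simp: h_def min_def field_simps)
  with d[of h] assms(3)[of "t - h"] show False by simp
qed

lemma DERIV_second_local_min_nonneg:
  fixes \<phi> \<psi> :: "real \<Rightarrow> real"
  assumes "d > 0" and min: "\<And>r. \<bar>r\<bar> < d \<Longrightarrow> \<phi> 0 \<le> \<phi> r"
    and \<phi>': "\<And>r. \<bar>r\<bar> < d \<Longrightarrow> (\<phi> has_real_derivative \<psi> r) (at r)"
    and \<psi>': "(\<psi> has_real_derivative D) (at 0)"
  shows "D \<ge> 0"
proof (rule ccontr)
  assume "\<not> D \<ge> 0"
  with DERIV_neg_dec_right[OF \<psi>'] obtain d' where "d' > 0"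
    and dec: "\<And>h. h > 0 \<Longrightarrow> h < d' \<Longrightarrow> \<psi> h < \<psi> 0" by auto
  have "\<psi> 0 = 0"
    using DERIV_local_min[OF \<phi>'[of 0] \<open>d > 0\<close>] \<open>d > 0\<close> min by auto
  define r where "r = min d d' / 2"
  have r: "0 < r" "r < d" "r < d'" using \<open>d > 0\<close> \<open>d' > 0\<close> by (auto simp: r_def)
  then obtain z where z: "0 < z" "z < r" "\<phi> r - \<phi> 0 = r * \<psi> z"
    using MVT2[of 0 r \<phi> \<psi>] \<phi>' by auto
  have "\<psi> z < 0" using dec[of z] z r \<open>\<psi> 0 = 0\<close> by simp
  then have "\<phi> r < \<phi> 0" using mult_pos_neg[of r "\<psi> z"] z r by linarith
  with min[of r] r show False by simp
qed

lemma local_min_pd_pd_nonneg: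
  fixes g h :: "real^'n::finite \<Rightarrow> real"
  assumes "open U" "x \<in> U"
    and min: "\<And>y. y \<in> U \<Longrightarrow> s * g x + \<epsilon> * h x \<le> s * g y + \<epsilon> * h y"
    and g: "\<And>y. y \<in> U \<Longrightarrow> (\<lambda>r. g (y + r *\<^sub>R axis i 1)) differentiable (at 0)"
      "(\<lambda>r. pd i g (x + r *\<^sub>R axis i 1)) differentiable (at 0)"
    and h: "\<And>y. y \<in> U \<Longrightarrow> (\<lambda>r. h (y + r *\<^sub>R axis i 1)) differentiable (at 0)"
      "(\<lambda>r. pd i h (x + r *\<^sub>R axis i 1)) differentiable (at 0)"
  shows "s * pd i (pd i g) x + \<epsilon> * pd i (pd i h) x \<ge> 0"
proof -
  obtain d where "d > 0" and "ball x d \<subseteq> U"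
    using \<open>open U\<close> \<open>x \<in> U\<close> open_contains_ball by blast
  then have line: "x + r *\<^sub>R axis i 1 \<in> U" if "\<bar>r\<bar> < d" for r
    using that by (auto simp: dist_norm)
  define \<phi> where "\<phi> r = s * g (x + r *\<^sub>R axis i 1) + \<epsilon> * h (x + r *\<^sub>R axis i 1)" for r
  define \<psi> where "\<psi> r = s * pd i g (x + r *\<^sub>R axis i 1) + \<epsilon> * pd i h (x + r *\<^sub>R axis i 1)" for r
  show ?thesis
  proof (rule DERIV_second_local_min_nonneg[OF \<open>d > 0\<close>])
    show "\<phi> 0 \<le> \<phi> r" if "\<bar>r\<bar> < d" for r
      using min[OF line[OF that]] by (simp add: \<phi>_def)
    show "(\<phi> has_real_derivative \<psi> r) (at r)" if "\<bar>r\<bar> < d" for r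
      unfolding \<phi>_def \<psi>_def
      using has_real_derivative_pd_on_line[OF g(1)[OF line[OF that]]]
        has_real_derivative_pd_on_line[OF h(1)[OF line[OF that]]]
      by (auto intro!: derivative_eq_intros)
    show "(\<psi> has_real_derivative s * pd i (pd i g) x + \<epsilon> * pd i (pd i h) x) (at 0)"
      unfolding \<psi>_def
      using has_real_derivative_pd[OF g(2)] has_real_derivative_pd[OF h(2)]
      by (auto intro!: derivative_eq_intros)
  qed
qed

(* outer_normal is defined through the defining function chosen by SOME, hence the
   hypothesis on \<rho>. *)
lemma neumann_min_not_on_frontier:
  fixes \<Omega> :: "(real^'n::finite) set" and w :: "real^'n \<Rightarrow> real \<Rightarrow> real"
  assumes cn: "classical_neumann \<Omega> w"
    and sdf: "smooth_defining_function \<Omega> \<rho>"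
    and \<rho>_def: "\<rho> = (SOME \<rho>. smooth_defining_function \<Omega> \<rho>)"
    and "\<epsilon> > 0" "t > 0" and xs: "xs \<in> closure \<Omega>"
    and min: "\<And>y. y \<in> closure \<Omega> \<Longrightarrow> s * w xs t + \<epsilon> * \<rho> xs \<le> s * w y t + \<epsilon> * \<rho> y"
  shows "xs \<in> \<Omega>"
proof (rule ccontr)
  assume "xs \<notin> \<Omega>"
  then have fr: "xs \<in> frontier \<Omega>"
    using xs smooth_defining_function_open[OF sdf] by (simp add: frontier_def interior_open)
  obtain Du where Du: "\<And>x t. x \<in> closure \<Omega> \<Longrightarrow> t > 0 \<Longrightarrow>
      ((\<lambda>y. w y t) has_derivative (\<lambda>h. Du x t \<bullet> h)) (at x within closure \<Omega>)"
    and neumann: "\<And>x t. x \<in> frontier \<Omega> \<Longrightarrow> t > 0 \<Longrightarrow> Du x t \<bullet> outer_normal \<Omega> x = 0"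
    using cn unfolding classical_neumann_def by blast
  have "Du xs t \<bullet> sgn (grad \<rho> xs) = 0"
    using neumann[OF fr \<open>t > 0\<close>] by (simp add: outer_normal_def Let_def flip: \<rho>_def)
  then have "(s *\<^sub>R Du xs t) \<bullet> grad \<rho> xs = 0"
    by (cases "grad \<rho> xs = 0") (auto simp: sgn_div_norm)
  moreover have "((\<lambda>y. s * w y t) has_derivative (\<lambda>h. (s *\<^sub>R Du xs t) \<bullet> h)) (at xs within closure \<Omega>)"
    using Du[OF xs \<open>t > 0\<close>] by (auto intro!: derivative_eq_intros)
  ultimately obtain y where "y \<in> \<Omega>" "s * w y t + \<epsilon> * \<rho> y < s * w xs t + \<epsilon> * \<rho> xs"
    using defining_function_boundary_not_min[OF sdf fr _ _ \<open>\<epsilon> > 0\<close>] by blast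
  with min[of y] closure_subset show False by auto
qed

lemma neumann_min_laplacian_nonneg:
  fixes \<Omega> :: "(real^'n::finite) set" and w :: "real^'n \<Rightarrow> real \<Rightarrow> real"
  assumes cn: "classical_neumann \<Omega> w" and "open \<Omega>" and sm: "smooth_on UNIV \<rho>"
    and "t > 0" "xs \<in> \<Omega>"
    and min: "\<And>y. y \<in> \<Omega> \<Longrightarrow> s * w xs t + \<epsilon> * \<rho> xs \<le> s * w y t + \<epsilon> * \<rho> y"
  shows "0 \<le> s * laplacian w xs t + \<epsilon> * pd_laplacian \<rho> xs"
proof -
  have "0 \<le> s * pd i (pd i (\<lambda>y. w y t)) xs + \<epsilon> * pd i (pd i \<rho>) xs" for i
  proof (rule local_min_pd_pd_nonneg[where g = "\<lambda>y. w y t" and h = \<rho>,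
        OF \<open>open \<Omega>\<close> \<open>xs \<in> \<Omega>\<close> min])
    show "(\<lambda>r. w (y + r *\<^sub>R axis i 1) t) differentiable (at 0)" if "y \<in> \<Omega>" for y
      using cn that \<open>t > 0\<close> unfolding classical_neumann_def by blast
    show "(\<lambda>r. pd i (\<lambda>y. w y t) (xs + r *\<^sub>R axis i 1)) differentiable (at 0)"
      using cn \<open>xs \<in> \<Omega>\<close> \<open>t > 0\<close> unfolding classical_neumann_def pdx_def pd_def by blast
    show "(\<lambda>r. \<rho> (y + r *\<^sub>R axis i 1)) differentiable (at 0)" for y
      using sm unfolding smooth_on_def by (metis UNIV_I pdl.simps(1))
    show "(\<lambda>r. pd i \<rho> (xs + r *\<^sub>R axis i 1)) differentiable (at 0)"
      using sm unfolding smooth_on_def by (metis UNIV_I pdl.simps)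
  qed
  then show ?thesis
    unfolding laplacian_eq_pd_laplacian pd_laplacian_def sum_distrib_left sum.distrib[symmetric]
    by (intro sum_nonneg) simp
qed

lemma first_contact_conditions:
  fixes \<Omega> :: "(real^'n::finite) set" and w :: "real^'n \<Rightarrow> real \<Rightarrow> real"
  assumes cn: "classical_neumann \<Omega> w"
    and sdf: "smooth_defining_function \<Omega> \<rho>"
    and \<rho>_def: "\<rho> = (SOME \<rho>. smooth_defining_function \<Omega> \<rho>)"
    and "\<epsilon> > 0" and \<beta>: "(\<beta> has_real_derivative \<beta>') (at ts)" and "ts > 0"
    and xs: "xs \<in> closure \<Omega>"
    and above: "\<And>x t. x \<in> closure \<Omega> \<Longrightarrow> 0 \<le> t \<Longrightarrow> t \<le> ts \<Longrightarrow>
      0 \<le> s * (w x t - \<beta> t) + \<epsilon> * (\<rho> x + C)"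
    and touch: "s * (w xs ts - \<beta> ts) + \<epsilon> * (\<rho> xs + C) = 0"
  shows "xs \<in> \<Omega>" and "s * pdt w xs ts \<le> s * \<beta>'"
    and "0 \<le> s * laplacian w xs ts + \<epsilon> * pd_laplacian \<rho> xs"
proof -
  have min: "s * w xs ts + \<epsilon> * \<rho> xs \<le> s * w y ts + \<epsilon> * \<rho> y" if "y \<in> closure \<Omega>" for y
    using above[OF that _ order_refl] touch \<open>ts > 0\<close> by (simp add: algebra_simps)
  show "xs \<in> \<Omega>"
    by (rule neumann_min_not_on_frontier[OF cn sdf \<rho>_def \<open>\<epsilon> > 0\<close> \<open>ts > 0\<close> xs min])
  have "smooth_on UNIV \<rho>"
    using sdf by (simp add: smooth_defining_function_def)
  moreover have "s * w xs ts + \<epsilon> * \<rho> xs \<le> s * w y ts + \<epsilon> * \<rho> y" if "y \<in> \<Omega>" for y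
    using min that closure_subset by blast
  ultimately show "0 \<le> s * laplacian w xs ts + \<epsilon> * pd_laplacian \<rho> xs"
    using neumann_min_laplacian_nonneg[OF cn smooth_defining_function_open[OF sdf]] \<open>ts > 0\<close>
      \<open>xs \<in> \<Omega>\<close> by blast
  have "w xs differentiable (at ts)"
    using cn \<open>xs \<in> \<Omega>\<close> \<open>ts > 0\<close> unfolding classical_neumann_def by blast
  then have "((\<lambda>t. s * (w xs t - \<beta> t) + \<epsilon> * (\<rho> xs + C))
      has_real_derivative s * (pdt w xs ts - \<beta>')) (at ts)"
    using \<beta> by (auto intro!: derivative_eq_intros simp: pdt_def DERIV_deriv_iff_real_differentiable)
  then have "s * (pdt w xs ts - \<beta>') \<le> 0"
    by (rule DERIV_left_min_nonpos[OF _ \<open>ts > 0\<close>]) (use above xs touch in auto)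
  then show "s * pdt w xs ts \<le> s * \<beta>'"
    by (simp add: algebra_simps)
qed

lemma continuous_on_pos_before_nonneg:
  fixes f :: "real \<Rightarrow> real"
  assumes "continuous_on {a..b} f" "a \<le> b" "f a > 0" and before: "\<And>t. a \<le> t \<Longrightarrow> t < b \<Longrightarrow> f t > 0"
  shows "f b \<ge> 0"
proof (rule ccontr)
  assume "\<not> f b \<ge> 0"
  then obtain t where "a \<le> t" "t \<le> b" "f t = 0"
    using IVT2'[of f b 0 a] assms by auto
  with before[of t] \<open>\<not> f b \<ge> 0\<close> show False
    by (cases "t = b") auto
qed

lemma first_touching_time:
  fixes Q :: "'a::metric_space \<Rightarrow> real \<Rightarrow> real"
  assumes "compact K"
    and cont: "continuous_on (K \<times> {0..T}) (\<lambda>p. Q (fst p) (snd p))"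
    and init: "\<And>x. x \<in> K \<Longrightarrow> Q x 0 > 0"
    and "x0 \<in> K" "0 \<le> t0" "t0 \<le> T" "Q x0 t0 \<le> 0"
  obtains xs ts where "xs \<in> K" "0 < ts" "ts \<le> T" "Q xs ts = 0"
    and "\<And>x t. x \<in> K \<Longrightarrow> 0 \<le> t \<Longrightarrow> t \<le> ts \<Longrightarrow> Q x t \<ge> 0"
proof -
  define S where "S = {p \<in> K \<times> {0..T}. Q (fst p) (snd p) \<le> 0}"
  have "compact (K \<times> {0..T})"
    using \<open>compact K\<close> by (simp add: compact_Times)
  then have "closed S"
    unfolding S_def by (intro continuous_on_closed_Collect_le cont continuous_on_const compact_imp_closed)
  with \<open>compact (K \<times> {0..T})\<close> have "compact (K \<times> {0..T} \<inter> S)"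
    by (rule compact_Int_closed)
  moreover have "K \<times> {0..T} \<inter> S = S"
    by (auto simp: S_def)
  ultimately have "compact S"
    by simp
  moreover have "(x0, t0) \<in> S"
    using assms by (simp add: S_def)
  ultimately obtain p where "p \<in> S" and first: "\<And>q. q \<in> S \<Longrightarrow> snd p \<le> snd q"
    using continuous_attains_inf[of S snd] continuous_on_snd[OF continuous_on_id] by blast
  obtain xs ts where p: "p = (xs, ts)" by fastforce
  have xs: "xs \<in> K" "0 \<le> ts" "ts \<le> T" "Q xs ts \<le> 0"
    using \<open>p \<in> S\<close> by (auto simp: S_def p)
  have before: "Q x t > 0" if "x \<in> K" "0 \<le> t" "t < ts" for x t
    using first[of "(x, t)"] that xs by (force simp: S_def p)
  have "ts \<noteq> 0"
    using init[OF \<open>xs \<in> K\<close>] xs by auto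
  have at_ts: "Q x ts \<ge> 0" if x: "x \<in> K" for x
  proof (rule continuous_on_pos_before_nonneg[of 0 ts "Q x"])
    have "continuous_on {0..ts} (\<lambda>t. Q (fst (x, t)) (snd (x, t)))"
      by (rule continuous_on_compose2[OF cont]) (use x xs in \<open>auto intro!: continuous_intros\<close>)
    then show "continuous_on {0..ts} (Q x)"
      by simp
  qed (use x xs init before in auto)
  show ?thesis
  proof
    show "xs \<in> K" "0 < ts" "ts \<le> T" "Q xs ts = 0"
      using xs \<open>ts \<noteq> 0\<close> at_ts[of xs] by auto
    show "Q x t \<ge> 0" if "x \<in> K" "0 \<le> t" "t \<le> ts" for x t
      using before[of x t] at_ts[of x] that by (cases "t = ts") auto
  qed
qed

section \<open>Reaction estimates\<close>

(* kh stands for inf k, so \<delta> > 0 is the hypothesis inf k > 1/a - 1. The barriers are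
   1 \<plusminus> A exp (-\<sigma> t) for u and \<plusminus> B exp (-\<sigma> t) for v, shifted by the boundary correction
   \<epsilon> (\<rho> + M) \<le> \<theta> exp (-\<sigma> t). In the reaction estimates, E is exp (-\<sigma> t) at the contact time
   and eh the correction at the contact point. *)
locale competition_constants =
  fixes a b c m d1 d2 kh \<delta> A B \<theta> \<sigma> :: real
  assumes rates_pos: "a > 0" "b > 0" "c > 0" "m > 0" "d1 > 0" "d2 > 0"
    and kh_nonneg: "kh \<ge> 0"
    and \<delta>_def: "\<delta> = a - 1 / (1 + kh)" and \<delta>_pos: "\<delta> > 0"
    and A: "A > 0" "8 * (1 + a) * A \<le> \<delta>"
    and B: "B > 0" "4 * c * B \<le> A" "8 * (1 + 2 * m) * B \<le> \<delta>"
    and \<theta>: "\<theta> > 0" "\<theta> \<le> A" "\<theta> \<le> B" "16 * d1 * \<theta> \<le> b * A" "8 * d2 * \<theta> \<le> \<delta> * B"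
    and \<sigma>: "\<sigma> > 0" "\<sigma> \<le> b / 8" "\<sigma> \<le> \<delta> / 8"
begin

lemma A_less_one_eighth: "A < 1 / 8"
proof -
  have "\<delta> < a"
    using kh_nonneg by (simp add: \<delta>_def)
  then have "8 * A * (1 + a) < 1 * (1 + a)"
    using A by (simp add: algebra_simps)
  then show ?thesis
    using rates_pos by (simp only: mult_less_cancel_right) simp
qed

lemma competition_term_bound:
  assumes "kk \<ge> kh" and u: "u \<ge> 1 - 2 * A"
  shows "1 / (1 + kk * u) - a * u \<le> - (3 / 4) * \<delta>"
proof -
  define p where "p = 1 + kh * (1 - 2 * A)"
  have "1 - 2 * A \<ge> 0" using A_less_one_eighth by simp
  then have "p \<ge> 1" "kh * (1 - 2 * A) \<le> kk * u"
    using assms kh_nonneg by (auto simp: p_def intro: mult_mono)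
  then have "1 / (1 + kk * u) \<le> 1 / p"
    by (intro divide_left_mono) (auto simp: p_def)
  also have "1 / p \<le> 1 / (1 + kh) + 2 * A"
  proof -
    have "kh \<le> p * (1 + kh)"
      using \<open>p \<ge> 1\<close> kh_nonneg mult_mono[of 1 p kh "1 + kh"] by simp
    then have "(1 + kh) * 1 \<le> p + 2 * A * (p * (1 + kh))"
      using mult_left_mono[of kh "p * (1 + kh)" "2 * A"] A by (simp add: p_def algebra_simps)
    then show ?thesis
      using \<open>p \<ge> 1\<close> kh_nonneg by (simp add: field_simps)
  qed
  finally have "1 / (1 + kk * u) \<le> 1 / (1 + kh) + 2 * A" .
  moreover have "a * (1 - 2 * A) \<le> a * u"
    using u rates_pos by (simp add: mult_left_mono)
  ultimately have "1 / (1 + kk * u) - a * u \<le> 1 / (1 + kh) + 2 * A - a * (1 - 2 * A)"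
    by linarith
  also have "\<dots> = - \<delta> + 2 * (1 + a) * A"
    by (simp add: \<delta>_def algebra_simps)
  also have "\<dots> \<le> - (3 / 4) * \<delta>"
    using A(2) by (simp add: algebra_simps)
  finally show ?thesis .
qed

lemma u_lower_barrier_reaction:
  assumes E: "0 < E" "E \<le> 1" and eh: "0 \<le> eh" "eh \<le> \<theta> * E"
    and u: "u = 1 - A * E - eh" and y: "y \<le> B * E + eh" and lap: "lap \<ge> - (\<theta> * E)"
  shows "d1 * lap + b * u * (1 - u - c * y) > \<sigma> * A * E"
proof -
  have "A * E \<le> A" "\<theta> * E \<le> \<theta>" "\<theta> * E \<le> B * E"
    using A \<theta> E by (simp_all add: mult_left_le mult_right_mono)
  then have "eh \<le> B * E"
    using eh by linarith
  have "c * y \<le> c * (B * E) + c * eh" "c * eh \<le> c * (B * E)" "4 * (c * (B * E)) \<le> A * E"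
    using mult_left_mono[OF y, of c] mult_left_mono[OF \<open>eh \<le> B * E\<close>, of c]
      mult_right_mono[OF B(2), of E] rates_pos E
    by (simp_all add: algebra_simps)
  then have "1 - u - c * y \<ge> A * E / 2"
    using u eh by linarith
  moreover have "u \<ge> 1 / 2"
    using u eh \<open>A * E \<le> A\<close> \<open>\<theta> * E \<le> \<theta>\<close> \<theta>(2) A_less_one_eighth by linarith
  ultimately have "b * u * (1 - u - c * y) \<ge> b * (1 / 2) * (A * E / 2)"
    using A E rates_pos by (intro mult_mono) (auto intro: mult_left_mono)
  moreover have "d1 * lap \<ge> - (b * A * E / 16)"
    using mult_left_mono[OF lap less_imp_le[OF rates_pos(5)]]
      mult_right_mono[OF \<theta>(4) less_imp_le[OF E(1)]] by (simp add: algebra_simps)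
  moreover have "\<sigma> * A * E \<le> b * A * E / 8" "b * A * E > 0"
    using mult_right_mono[OF \<sigma>(2), of "A * E"] A E rates_pos by (simp_all add: algebra_simps)
  ultimately show ?thesis by linarith
qed

lemma u_upper_barrier_reaction:
  assumes E: "0 < E" "E \<le> 1" and eh: "0 \<le> eh" "eh \<le> \<theta> * E"
    and u: "u = 1 + A * E + eh" and y: "y \<ge> - (B * E) - eh" and lap: "lap \<le> \<theta> * E"
  shows "d1 * lap + b * u * (1 - u - c * y) < - (\<sigma> * A * E)"
proof -
  have "\<theta> * E \<le> B * E" "A * E > 0"
    using A \<theta> E by (simp_all add: mult_right_mono)
  then have "eh \<le> B * E"
    using eh by linarith
  have "- (c * y) \<le> c * (B * E) + c * eh" "c * eh \<le> c * (B * E)" "4 * (c * (B * E)) \<le> A * E"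
    using mult_left_mono[OF y, of c] mult_left_mono[OF \<open>eh \<le> B * E\<close>, of c]
      mult_right_mono[OF B(2), of E] rates_pos E
    by (simp_all add: algebra_simps)
  then have X: "1 - u - c * y \<le> - (A * E / 2)"
    using u eh by linarith
  have "u \<ge> 1"
    using u eh \<open>A * E > 0\<close> by linarith
  then have "u * (1 - u - c * y) \<le> 1 * (1 - u - c * y)"
    using X \<open>A * E > 0\<close> by (intro mult_right_mono_neg) auto
  then have "u * (1 - u - c * y) \<le> - (A * E / 2)"
    using X by simp
  from mult_left_mono[OF this less_imp_le[OF rates_pos(2)]]
  have "b * u * (1 - u - c * y) \<le> b * (- (A * E / 2))"
    by (simp add: mult.assoc)
  moreover have "d1 * lap \<le> b * A * E / 16"
    using mult_left_mono[OF lap less_imp_le[OF rates_pos(5)]]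
      mult_right_mono[OF \<theta>(4) less_imp_le[OF E(1)]] by (simp add: algebra_simps)
  moreover have "\<sigma> * A * E \<le> b * A * E / 8" "b * A * E > 0"
    using mult_right_mono[OF \<sigma>(2), of "A * E"] A E rates_pos by (simp_all add: algebra_simps)
  ultimately show ?thesis by linarith
qed

lemma v_lower_barrier_reaction:
  assumes E: "0 < E" "E \<le> 1" and eh: "0 \<le> eh" "eh \<le> \<theta> * E"
    and y: "y = - (B * E) - eh" and u: "0 < u" "u \<le> 2"
    and G: "1 / (1 + kk * u) - a * u \<le> - (3 / 4) * \<delta>" and lap: "lap \<ge> - (\<theta> * E)"
  shows "d2 * lap + y * (1 / (1 + kk * u) - y - a * u - m * u * y) > \<sigma> * B * E"
proof -
  define F where "F = 1 / (1 + kk * u) - y - a * u - m * u * y"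
  have "B * E \<le> B" "\<theta> * E \<le> \<theta>" "B * E > 0"
    using B \<theta> E by (simp_all add: mult_left_le)
  then have z: "B * E \<le> - y" "- y \<le> 2 * B"
    using y eh \<theta>(3) by linarith+
  have "- y * (1 + m * u) \<le> 2 * B * (1 + 2 * m)"
    using z u B rates_pos by (intro mult_mono) auto
  then have "F \<le> - (\<delta> / 2)"
    using G B(3) by (simp add: F_def algebra_simps)
  then have "B * E * (\<delta> / 2) \<le> - y * - F"
    using z \<delta>_pos \<open>B * E > 0\<close> by (intro mult_mono) auto
  then have "y * F \<ge> B * E * (\<delta> / 2)"
    by simp
  moreover have "d2 * lap \<ge> - (\<delta> * B * E / 8)"
    using mult_left_mono[OF lap less_imp_le[OF rates_pos(6)]]
      mult_right_mono[OF \<theta>(5) less_imp_le[OF E(1)]] by (simp add: algebra_simps)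
  moreover have "\<sigma> * B * E \<le> \<delta> * B * E / 8" "\<delta> * B * E > 0"
    using mult_right_mono[OF \<sigma>(3), of "B * E"] B E \<delta>_pos by (simp_all add: algebra_simps)
  ultimately show ?thesis
    unfolding F_def by (simp add: algebra_simps)
qed

lemma v_upper_barrier_reaction:
  assumes E: "0 < E" "E \<le> 1" and eh: "0 \<le> eh" "eh \<le> \<theta> * E"
    and y: "y = B * E + eh" and u: "0 < u"
    and G: "1 / (1 + kk * u) - a * u \<le> - (3 / 4) * \<delta>" and lap: "lap \<le> \<theta> * E"
  shows "d2 * lap + y * (1 / (1 + kk * u) - y - a * u - m * u * y) < - (\<sigma> * B * E)"
proof -
  define F where "F = 1 / (1 + kk * u) - y - a * u - m * u * y"
  have "B * E > 0"
    using B E by simp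
  then have "y \<ge> B * E" "m * u * y \<ge> 0"
    using y eh u rates_pos by auto
  then have "F \<le> - (3 / 4) * \<delta>"
    using G \<open>B * E > 0\<close> unfolding F_def by linarith
  then have "y * F \<le> y * (- (3 / 4) * \<delta>)"
    using \<open>y \<ge> B * E\<close> \<open>B * E > 0\<close> by (intro mult_left_mono) auto
  also have "\<dots> \<le> B * E * (- (3 / 4) * \<delta>)"
    using mult_right_mono_neg[OF \<open>y \<ge> B * E\<close>, of "- (3 / 4) * \<delta>"] \<delta>_pos by simp
  finally have "y * F \<le> B * E * (- (3 / 4) * \<delta>)" .
  moreover have "d2 * lap \<le> \<delta> * B * E / 8"
    using mult_left_mono[OF lap less_imp_le[OF rates_pos(6)]]
      mult_right_mono[OF \<theta>(5) less_imp_le[OF E(1)]] by (simp add: algebra_simps)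
  moreover have "\<sigma> * B * E \<le> \<delta> * B * E / 8" "\<delta> * B * E > 0"
    using mult_right_mono[OF \<sigma>(3), of "B * E"] B E \<delta>_pos by (simp_all add: algebra_simps)
  ultimately show ?thesis
    unfolding F_def by (simp add: algebra_simps)
qed

end

lemma competition_constants_exist:
  fixes a b c m d1 d2 kh :: real
  assumes pos: "a > 0" "b > 0" "c > 0" "m > 0" "d1 > 0" "d2 > 0"
    and "kh \<ge> 0" and kh: "kh > 1 / a - 1"
  shows "\<exists>\<delta> A B \<theta> \<sigma>. competition_constants a b c m d1 d2 kh \<delta> A B \<theta> \<sigma>"
proof -
  define \<delta> where "\<delta> = a - 1 / (1 + kh)"
  define A where "A = \<delta> / (8 * (1 + a))"
  define B where "B = min (A / (4 * c)) (\<delta> / (8 * (1 + 2 * m)))"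
  define \<theta> where "\<theta> = min (min A B) (min (b * A / (16 * d1)) (\<delta> * B / (8 * d2)))"
  define \<sigma> where "\<sigma> = min (b / 8) (\<delta> / 8)"
  have "1 < a * (1 + kh)"
    using kh pos by (simp add: field_simps)
  then have "\<delta> > 0"
    using \<open>kh \<ge> 0\<close> by (simp add: \<delta>_def field_simps)
  then have "A > 0" "8 * (1 + a) * A \<le> \<delta>"
    using pos by (simp_all add: A_def)
  moreover from this have "B > 0" "B \<le> A / (4 * c)" "B \<le> \<delta> / (8 * (1 + 2 * m))"
    using pos \<open>\<delta> > 0\<close> by (simp_all add: B_def)
  moreover from this have "4 * c * B \<le> A" "8 * (1 + 2 * m) * B \<le> \<delta>"
    using pos by (simp_all add: field_simps)
  moreover from calculation have "\<theta> > 0" "\<theta> \<le> A" "\<theta> \<le> B" "\<theta> \<le> b * A / (16 * d1)" "\<theta> \<le> \<delta> * B / (8 * d2)"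
    using pos \<open>\<delta> > 0\<close> \<open>A > 0\<close> by (simp_all add: \<theta>_def)
  moreover from this have "16 * d1 * \<theta> \<le> b * A" "8 * d2 * \<theta> \<le> \<delta> * B"
    using pos by (simp_all add: field_simps)
  moreover have "\<sigma> > 0" "\<sigma> \<le> b / 8" "\<sigma> \<le> \<delta> / 8"
    using pos \<open>\<delta> > 0\<close> by (simp_all add: \<sigma>_def)
  ultimately have "competition_constants a b c m d1 d2 kh \<delta> A B \<theta> \<sigma>"
    using pos \<open>kh \<ge> 0\<close> \<open>\<delta> > 0\<close> \<delta>_def by unfold_locales simp_all
  then show ?thesis by blast
qed

section \<open>Exponential barriers\<close>

lemma uniformly_small_of_exp_decay:
  fixes f :: "'a \<Rightarrow> real \<Rightarrow> real"
  assumes "\<sigma> > 0" "e > 0"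
    and decay: "\<And>x t. x \<in> S \<Longrightarrow> 0 \<le> t \<Longrightarrow> \<bar>f x t\<bar> \<le> C * exp (- \<sigma> * t)"
  shows "\<exists>T. \<forall>t\<ge>T. \<forall>x\<in>S. \<bar>f x t\<bar> < e"
proof -
  have "filterlim (\<lambda>t. \<sigma> * t) at_top at_top"
    using \<open>\<sigma> > 0\<close> by (intro filterlim_tendsto_pos_mult_at_top[OF tendsto_const] filterlim_ident)
  then have "((\<lambda>t. C * exp (- (\<sigma> * t))) \<longlongrightarrow> C * 0) at_top"
    by (intro tendsto_mult tendsto_const filterlim_compose[OF exp_at_bot]
        filterlim_compose[OF filterlim_uminus_at_bot_at_top])
  then have "eventually (\<lambda>t. C * exp (- \<sigma> * t) < e) at_top"
    using order_tendstoD(2) \<open>e > 0\<close> by fastforce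
  then have "eventually (\<lambda>t. C * exp (- \<sigma> * t) < e \<and> 0 \<le> t) at_top"
    using eventually_ge_at_top eventually_conj by blast
  then obtain T where "\<And>t. t \<ge> T \<Longrightarrow> C * exp (- \<sigma> * t) < e \<and> 0 \<le> t"
    by (auto simp: eventually_at_top_linorder)
  then show ?thesis
    using decay by (meson order.strict_trans1)
qed

locale competition_solution = competition_constants +
  fixes \<Omega> :: "(real^'n::finite) set" and k \<rho> :: "real^'n \<Rightarrow> real"
    and u v :: "real^'n \<Rightarrow> real \<Rightarrow> real" and M :: real
  assumes domain: "smooth_bounded_domain \<Omega>"
    and \<rho>_def: "\<rho> = (SOME \<rho>. smooth_defining_function \<Omega> \<rho>)"
    and M: "\<And>x. x \<in> closure \<Omega> \<Longrightarrow> \<bar>\<rho> x\<bar> \<le> M \<and> \<bar>pd_laplacian \<rho> x\<bar> \<le> M"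
    and k_ge: "\<And>x. x \<in> \<Omega> \<Longrightarrow> kh \<le> k x"
    and solution: "is_solution \<Omega> a b c m d1 d2 k 1 (B / 2) u v"
begin

lemma defining_function: "smooth_defining_function \<Omega> \<rho>"
  unfolding \<rho>_def by (rule smooth_bounded_domain_defining_function[OF domain])

lemma M_nonneg: "M \<ge> 0"
proof -
  obtain x where "x \<in> \<Omega>"
    using domain by (auto simp: smooth_bounded_domain_def)
  then show ?thesis
    using M[of x] closure_subset by fastforce
qed

lemma barrier_slack:
  assumes "\<epsilon> > 0" and small: "2 * \<epsilon> * M \<le> \<theta> * E" and "x \<in> closure \<Omega>"
  shows "0 \<le> \<epsilon> * (\<rho> x + M)" "\<epsilon> * (\<rho> x + M) \<le> \<theta> * E"
    and "\<bar>\<epsilon> * pd_laplacian \<rho> x\<bar> \<le> \<theta> * E"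
proof -
  have "0 \<le> \<rho> x + M" "\<rho> x + M \<le> 2 * M" "\<bar>pd_laplacian \<rho> x\<bar> \<le> 2 * M"
    using M[OF \<open>x \<in> closure \<Omega>\<close>] M_nonneg by auto
  then have "\<epsilon> * (\<rho> x + M) \<le> 2 * \<epsilon> * M" "\<epsilon> * \<bar>pd_laplacian \<rho> x\<bar> \<le> 2 * \<epsilon> * M"
    using mult_left_mono[of _ "2 * M" \<epsilon>] \<open>\<epsilon> > 0\<close> by (simp_all add: mult.left_commute)
  with small show "\<epsilon> * (\<rho> x + M) \<le> \<theta> * E" "\<bar>\<epsilon> * pd_laplacian \<rho> x\<bar> \<le> \<theta> * E"
    using \<open>\<epsilon> > 0\<close> by (simp_all only: abs_mult abs_of_pos)
  show "0 \<le> \<epsilon> * (\<rho> x + M)"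
    using \<open>0 \<le> \<rho> x + M\<close> \<open>\<epsilon> > 0\<close> by simp
qed

lemma barrier_contact:
  assumes w: "classical_neumann \<Omega> w" and "\<epsilon> > 0" "ts > 0" and xs: "xs \<in> closure \<Omega>"
    and small: "2 * \<epsilon> * M \<le> \<theta> * exp (- \<sigma> * ts)"
    and before: "\<And>y t. y \<in> closure \<Omega> \<Longrightarrow> 0 \<le> t \<Longrightarrow> t \<le> ts \<Longrightarrow>
      \<bar>w y t - p\<bar> \<le> R * exp (- \<sigma> * t) + \<epsilon> * (\<rho> y + M)"
    and s: "s = 1 \<or> s = -1"
    and touch: "s * (w xs ts - p) = R * exp (- \<sigma> * ts) + \<epsilon> * (\<rho> xs + M)"
  shows "xs \<in> \<Omega>" "s * pdt w xs ts \<ge> - (\<sigma> * R * exp (- \<sigma> * ts))"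
    and "s * laplacian w xs ts \<le> \<theta> * exp (- \<sigma> * ts)"
proof -
  define \<beta> where "\<beta> t = p + s * R * exp (- \<sigma> * t)" for t
  have "(\<beta> has_real_derivative - s * (\<sigma> * R * exp (- \<sigma> * ts))) (at ts)"
    unfolding \<beta>_def by (auto intro!: derivative_eq_intros)
  moreover have "0 \<le> - s * (w y t - \<beta> t) + \<epsilon> * (\<rho> y + M)"
    if "y \<in> closure \<Omega>" "0 \<le> t" "t \<le> ts" for y t
    using before[OF that] s by (auto simp: \<beta>_def abs_le_iff algebra_simps)
  moreover have "- s * (w xs ts - \<beta> ts) + \<epsilon> * (\<rho> xs + M) = 0"
    using touch s by (auto simp: \<beta>_def algebra_simps)
  ultimately have "xs \<in> \<Omega>" "- s * pdt w xs ts \<le> - s * (- s * (\<sigma> * R * exp (- \<sigma> * ts)))"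
    "0 \<le> - s * laplacian w xs ts + \<epsilon> * pd_laplacian \<rho> xs"
    using first_contact_conditions[OF w defining_function \<rho>_def \<open>\<epsilon> > 0\<close> _ \<open>ts > 0\<close> xs] by blast+
  then show "xs \<in> \<Omega>" "s * pdt w xs ts \<ge> - (\<sigma> * R * exp (- \<sigma> * ts))"
    and "s * laplacian w xs ts \<le> \<theta> * exp (- \<sigma> * ts)"
    using s barrier_slack(3)[OF \<open>\<epsilon> > 0\<close> small xs] by auto
qed

lemma solution_neumann: "classical_neumann \<Omega> u" "classical_neumann \<Omega> v"
  using solution by (simp_all add: is_solution_def)

lemma solution_initial: "x \<in> closure \<Omega> \<Longrightarrow> u x 0 = 1 \<and> v x 0 = B / 2"
  using solution by (simp add: is_solution_def)

lemma solution_equations: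
  assumes "x \<in> \<Omega>" "t > 0"
  shows "pdt u x t = d1 * laplacian u x t + b * u x t * (1 - u x t - c * v x t)"
    and "pdt v x t = d2 * laplacian v x t
           + v x t * (1 / (1 + k x * u x t) - v x t - a * u x t - m * u x t * v x t)"
  using solution assms by (simp_all add: is_solution_def)

lemma u_barrier_strict:
  assumes "\<epsilon> > 0" "ts > 0" and xs: "xs \<in> closure \<Omega>"
    and small: "2 * \<epsilon> * M \<le> \<theta> * exp (- \<sigma> * ts)"
    and v_xs: "\<bar>v xs ts\<bar> \<le> B * exp (- \<sigma> * ts) + \<epsilon> * (\<rho> xs + M)"
    and before: "\<And>y t. y \<in> closure \<Omega> \<Longrightarrow> 0 \<le> t \<Longrightarrow> t \<le> ts \<Longrightarrow>
      \<bar>u y t - 1\<bar> \<le> A * exp (- \<sigma> * t) + \<epsilon> * (\<rho> y + M)"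
  shows "\<bar>u xs ts - 1\<bar> < A * exp (- \<sigma> * ts) + \<epsilon> * (\<rho> xs + M)"
proof (rule ccontr)
  define E eh where "E = exp (- \<sigma> * ts)" and "eh = \<epsilon> * (\<rho> xs + M)"
  have E: "0 < E" "E \<le> 1"
    using \<sigma> \<open>ts > 0\<close> by (auto simp: E_def)
  have eh: "0 \<le> eh" "eh \<le> \<theta> * E"
    using barrier_slack[OF \<open>\<epsilon> > 0\<close> small xs] by (simp_all add: E_def eh_def)
  note contact = barrier_contact[OF solution_neumann(1) \<open>\<epsilon> > 0\<close> \<open>ts > 0\<close> xs small before]
  assume "\<not> ?thesis"
  with before[OF xs _ order_refl] \<open>ts > 0\<close>
  consider "1 * (u xs ts - 1) = A * E + eh" | "-1 * (u xs ts - 1) = A * E + eh"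
    by (fastforce simp: E_def eh_def abs_if split: if_splits)
  then show False
  proof cases
    case 1
    then have "u xs ts = 1 + A * E + eh"
      by simp
    moreover obtain "xs \<in> \<Omega>" "pdt u xs ts \<ge> - (\<sigma> * A * E)" "laplacian u xs ts \<le> \<theta> * E"
      using contact[of 1] 1 by (auto simp: E_def eh_def)
    moreover have "v xs ts \<ge> - (B * E) - eh"
      using v_xs by (simp add: E_def eh_def abs_le_iff)
    ultimately show False
      using u_upper_barrier_reaction[OF E eh] solution_equations(1)[of xs ts] \<open>ts > 0\<close> by fastforce
  next
    case 2
    then have "u xs ts = 1 - A * E - eh"
      by simp
    moreover obtain "xs \<in> \<Omega>" "pdt u xs ts \<le> \<sigma> * A * E" "laplacian u xs ts \<ge> - (\<theta> * E)"
      using contact[of "-1"] 2 by (auto simp: E_def eh_def)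
    moreover have "v xs ts \<le> B * E + eh"
      using v_xs by (simp add: E_def eh_def abs_le_iff)
    ultimately show False
      using u_lower_barrier_reaction[OF E eh] solution_equations(1)[of xs ts] \<open>ts > 0\<close> by fastforce
  qed
qed

lemma v_barrier_strict:
  assumes "\<epsilon> > 0" "ts > 0" and xs: "xs \<in> closure \<Omega>"
    and small: "2 * \<epsilon> * M \<le> \<theta> * exp (- \<sigma> * ts)"
    and u_xs: "\<bar>u xs ts - 1\<bar> \<le> A * exp (- \<sigma> * ts) + \<epsilon> * (\<rho> xs + M)"
    and before: "\<And>y t. y \<in> closure \<Omega> \<Longrightarrow> 0 \<le> t \<Longrightarrow> t \<le> ts \<Longrightarrow>
      \<bar>v y t\<bar> \<le> B * exp (- \<sigma> * t) + \<epsilon> * (\<rho> y + M)"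
  shows "\<bar>v xs ts\<bar> < B * exp (- \<sigma> * ts) + \<epsilon> * (\<rho> xs + M)"
proof (rule ccontr)
  define E eh where "E = exp (- \<sigma> * ts)" and "eh = \<epsilon> * (\<rho> xs + M)"
  have E: "0 < E" "E \<le> 1"
    using \<sigma> \<open>ts > 0\<close> by (auto simp: E_def)
  have eh: "0 \<le> eh" "eh \<le> \<theta> * E"
    using barrier_slack[OF \<open>\<epsilon> > 0\<close> small xs] by (simp_all add: E_def eh_def)
  have "A * E \<le> A" "\<theta> * E \<le> \<theta>"
    using A \<theta> E by (simp_all add: mult_left_le)
  then have u: "0 < u xs ts" "u xs ts \<le> 2" "u xs ts \<ge> 1 - 2 * A"
    using u_xs eh \<theta>(2) A_less_one_eighth by (auto simp: E_def eh_def abs_le_iff)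
  have "\<bar>v y t - 0\<bar> \<le> B * exp (- \<sigma> * t) + \<epsilon> * (\<rho> y + M)"
    if "y \<in> closure \<Omega>" "0 \<le> t" "t \<le> ts" for y t
    using before[OF that] by simp
  note contact = barrier_contact[OF solution_neumann(2) \<open>\<epsilon> > 0\<close> \<open>ts > 0\<close> xs small this]
  assume "\<not> ?thesis"
  with before[OF xs _ order_refl] \<open>ts > 0\<close>
  consider "1 * (v xs ts - 0) = B * E + eh" | "-1 * (v xs ts - 0) = B * E + eh"
    by (fastforce simp: E_def eh_def abs_if split: if_splits)
  then show False
  proof cases
    case 1
    then have "v xs ts = B * E + eh"
      by simp
    moreover obtain "xs \<in> \<Omega>" "pdt v xs ts \<ge> - (\<sigma> * B * E)" "laplacian v xs ts \<le> \<theta> * E"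
      using contact[of 1] 1 by (auto simp: E_def eh_def)
    ultimately show False
      using v_upper_barrier_reaction[OF E eh _ u(1) competition_term_bound[OF k_ge u(3)]]
        solution_equations(2)[of xs ts] \<open>ts > 0\<close> by fastforce
  next
    case 2
    then have "v xs ts = - (B * E) - eh"
      by simp
    moreover obtain "xs \<in> \<Omega>" "pdt v xs ts \<le> \<sigma> * B * E" "laplacian v xs ts \<ge> - (\<theta> * E)"
      using contact[of "-1"] 2 by (auto simp: E_def eh_def)
    ultimately show False
      using v_lower_barrier_reaction[OF E eh _ u(1,2) competition_term_bound[OF k_ge u(3)]]
        solution_equations(2)[of xs ts] \<open>ts > 0\<close> by fastforce
  qed
qed

definition barrier_gap :: "real \<Rightarrow> real^'n \<Rightarrow> real \<Rightarrow> real" where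
  "barrier_gap \<epsilon> y t = min (A * exp (- \<sigma> * t) + \<epsilon> * (\<rho> y + M) - \<bar>u y t - 1\<bar>)
    (B * exp (- \<sigma> * t) + \<epsilon> * (\<rho> y + M) - \<bar>v y t\<bar>)"

lemma barrier_gap_continuous:
  "continuous_on (closure \<Omega> \<times> {0..T}) (\<lambda>p. barrier_gap \<epsilon> (fst p) (snd p))"
proof -
  have sol: "continuous_on (closure \<Omega> \<times> {0..T}) (\<lambda>p. w (fst p) (snd p))"
    if "classical_neumann \<Omega> w" for w
  proof (rule continuous_on_subset)
    show "continuous_on (closure \<Omega> \<times> {0..}) (\<lambda>p. w (fst p) (snd p))"
      using that by (simp add: classical_neumann_def)
  qed auto
  have "continuous_on UNIV (pdl [] \<rho>)"
    using defining_function unfolding smooth_defining_function_def smooth_on_def by blast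
  then have "continuous_on (closure \<Omega> \<times> {0..T}) (\<lambda>p. \<rho> (fst p))"
    using continuous_on_compose2[of UNIV \<rho> _ fst] continuous_on_fst[OF continuous_on_id] by auto
  then show ?thesis
    unfolding barrier_gap_def
    by (intro continuous_intros sol[OF solution_neumann(1)] sol[OF solution_neumann(2)])
qed

lemma barrier_gap_initial:
  assumes "\<epsilon> > 0" "y \<in> closure \<Omega>"
  shows "barrier_gap \<epsilon> y 0 > 0"
proof -
  have "0 \<le> \<rho> y + M"
    using M[OF \<open>y \<in> closure \<Omega>\<close>] by linarith
  then have "0 \<le> \<epsilon> * (\<rho> y + M)"
    using \<open>\<epsilon> > 0\<close> by simp
  then show ?thesis
    using solution_initial[OF \<open>y \<in> closure \<Omega>\<close>] A B by (simp add: barrier_gap_def)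
qed

lemma barrier_gap_pos:
  assumes "\<epsilon> > 0" and small: "2 * \<epsilon> * M \<le> \<theta> * exp (- \<sigma> * T)"
    and "x \<in> closure \<Omega>" "0 \<le> t" "t \<le> T"
  shows "barrier_gap \<epsilon> x t > 0"
proof (rule ccontr)
  assume "\<not> barrier_gap \<epsilon> x t > 0"
  moreover have "compact (closure \<Omega>)"
    using domain by (simp add: smooth_bounded_domain_def compact_closure)
  ultimately obtain xs ts where xs: "xs \<in> closure \<Omega>" "0 < ts" "ts \<le> T" "barrier_gap \<epsilon> xs ts = 0"
    and before: "\<And>y t. y \<in> closure \<Omega> \<Longrightarrow> 0 \<le> t \<Longrightarrow> t \<le> ts \<Longrightarrow> barrier_gap \<epsilon> y t \<ge> 0"
    using first_touching_time[OF _ barrier_gap_continuous barrier_gap_initial[OF \<open>\<epsilon> > 0\<close>] assms(3-5)]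
    by (metis not_less)
  have "exp (- \<sigma> * T) \<le> exp (- \<sigma> * ts)"
    using \<sigma> xs(3) by simp
  then have small_ts: "2 * \<epsilon> * M \<le> \<theta> * exp (- \<sigma> * ts)"
    using small \<theta> by (meson mult_left_mono less_imp_le order_trans)
  have u_before: "\<bar>u y t - 1\<bar> \<le> A * exp (- \<sigma> * t) + \<epsilon> * (\<rho> y + M)"
    and v_before: "\<bar>v y t\<bar> \<le> B * exp (- \<sigma> * t) + \<epsilon> * (\<rho> y + M)"
    if "y \<in> closure \<Omega>" "0 \<le> t" "t \<le> ts" for y t
    using before[OF that] by (simp_all add: barrier_gap_def)
  have "\<bar>u xs ts - 1\<bar> < A * exp (- \<sigma> * ts) + \<epsilon> * (\<rho> xs + M)"
    by (rule u_barrier_strict[OF \<open>\<epsilon> > 0\<close> xs(2,1) small_ts v_before[OF xs(1)] u_before])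
      (use xs in auto)
  moreover have "\<bar>v xs ts\<bar> < B * exp (- \<sigma> * ts) + \<epsilon> * (\<rho> xs + M)"
    by (rule v_barrier_strict[OF \<open>\<epsilon> > 0\<close> xs(2,1) small_ts u_before[OF xs(1)] v_before])
      (use xs in auto)
  ultimately show False
    using xs(4) by (simp add: barrier_gap_def)
qed

lemma exponential_decay:
  assumes "x \<in> closure \<Omega>" "0 \<le> t"
  shows "\<bar>u x t - 1\<bar> \<le> (A + \<theta>) * exp (- \<sigma> * t)" and "\<bar>v x t\<bar> \<le> (B + \<theta>) * exp (- \<sigma> * t)"
proof -
  define \<epsilon> where "\<epsilon> = \<theta> * exp (- \<sigma> * t) / (2 * M + 1)"
  have "\<epsilon> > 0"
    using \<theta> M_nonneg by (simp add: \<epsilon>_def)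
  moreover have "2 * \<epsilon> * M \<le> \<theta> * exp (- \<sigma> * t)"
    using \<theta> M_nonneg by (simp add: \<epsilon>_def field_simps)
  ultimately have "\<epsilon> * (\<rho> x + M) \<le> \<theta> * exp (- \<sigma> * t)"
    "\<bar>u x t - 1\<bar> < A * exp (- \<sigma> * t) + \<epsilon> * (\<rho> x + M)"
    "\<bar>v x t\<bar> < B * exp (- \<sigma> * t) + \<epsilon> * (\<rho> x + M)"
    using barrier_slack(2) barrier_gap_pos[of \<epsilon> t x t] assms by (auto simp: barrier_gap_def)
  then show "\<bar>u x t - 1\<bar> \<le> (A + \<theta>) * exp (- \<sigma> * t)" and "\<bar>v x t\<bar> \<le> (B + \<theta>) * exp (- \<sigma> * t)"
    by (simp_all add: algebra_simps)
qed

lemma uniform_convergence: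
  assumes "e > 0"
  shows "\<exists>T. \<forall>t\<ge>T. \<forall>x\<in>closure \<Omega>. \<bar>u x t - 1\<bar> < e \<and> \<bar>v x t\<bar> < e"
proof -
  obtain T1 where "\<forall>t\<ge>T1. \<forall>x\<in>closure \<Omega>. \<bar>u x t - 1\<bar> < e"
    using uniformly_small_of_exp_decay[where f = "\<lambda>x t. u x t - 1", OF \<sigma>(1) assms
        exponential_decay(1)] by blast
  moreover obtain T2 where "\<forall>t\<ge>T2. \<forall>x\<in>closure \<Omega>. \<bar>v x t\<bar> < e"
    using uniformly_small_of_exp_decay[where f = v, OF \<sigma>(1) assms exponential_decay(2)] by blast
  ultimately show ?thesis
    by (intro exI[of _ "max T1 T2"]) auto
qed

end

lemma Inf_image_of_nonneg:
  fixes f :: "'a \<Rightarrow> real"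
  assumes "S \<noteq> {}" and "\<And>x. x \<in> S \<Longrightarrow> 0 \<le> f x"
  shows "0 \<le> Inf (f ` S)" and "\<And>x. x \<in> S \<Longrightarrow> Inf (f ` S) \<le> f x"
proof -
  show "0 \<le> Inf (f ` S)"
    using assms by (intro cInf_greatest) auto
  have "bdd_below (f ` S)"
    using assms(2) by (intro bdd_belowI[of _ 0]) auto
  then show "Inf (f ` S) \<le> f x" if "x \<in> S" for x
    by (rule cInf_lower[OF imageI[OF that]])
qed

theorem theorem14:
  fixes \<Omega> :: "(real^'n::finite) set"
    and k :: "real^'n \<Rightarrow> real"
    and a b c m d1 d2 :: real
  assumes "smooth_bounded_domain \<Omega>"
    and "a > 0" "b > 0" "c > 0" "m > 0" "d1 > 0" "d2 > 0"
    and "\<exists>g :: real^'n \<Rightarrow> real^'n. continuous_on \<Omega> g \<and>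
           (\<forall>x\<in>\<Omega>. (k has_derivative (\<lambda>h. g x \<bullet> h)) (at x))"
    and "\<forall>x\<in>\<Omega>. k x \<ge> 0"
    and "\<forall>S. S \<subseteq> \<Omega> \<and> S \<in> sets lebesgue \<and> emeasure lebesgue S > 0 \<longrightarrow> (\<exists>x\<in>S. k x \<noteq> 0)"
    and "Inf (k ` \<Omega>) > 1 / a - 1"
  shows "\<exists>u0 v0. u0 > 0 \<and> v0 > 0 \<and>
           (\<forall>u v. is_solution \<Omega> a b c m d1 d2 k u0 v0 u v \<longrightarrow>
              (\<forall>\<epsilon>>0. \<exists>T. \<forall>t\<ge>T. \<forall>x\<in>closure \<Omega>. \<bar>u x t - 1\<bar> < \<epsilon> \<and> \<bar>v x t\<bar> < \<epsilon>))"
proof -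
  define kh where "kh = Inf (k ` \<Omega>)"
  have "\<Omega> \<noteq> {}" "bounded \<Omega>"
    using assms(1) by (auto simp: smooth_bounded_domain_def)
  then have "kh \<ge> 0" and k_ge: "\<And>x. x \<in> \<Omega> \<Longrightarrow> kh \<le> k x"
    unfolding kh_def using Inf_image_of_nonneg[of \<Omega> k] assms(9) by auto
  moreover have "kh > 1 / a - 1"
    using assms(11) by (simp add: kh_def)
  ultimately obtain \<delta> A B \<theta> \<sigma> where constants: "competition_constants a b c m d1 d2 kh \<delta> A B \<theta> \<sigma>"
    using competition_constants_exist[OF assms(2-7)] by blast
  define \<rho> where "\<rho> = (SOME \<rho>. smooth_defining_function \<Omega> \<rho>)"
  obtain M where M: "\<And>x. x \<in> closure \<Omega> \<Longrightarrow> \<bar>\<rho> x\<bar> \<le> M \<and> \<bar>pd_laplacian \<rho> x\<bar> \<le> M"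
    using defining_function_bounded_on_closure[OF \<open>bounded \<Omega>\<close>]
      smooth_bounded_domain_defining_function[OF assms(1)] unfolding \<rho>_def by blast
  have "competition_solution a b c m d1 d2 kh \<delta> A B \<theta> \<sigma> \<Omega> k \<rho> u v M"
    if "is_solution \<Omega> a b c m d1 d2 k 1 (B / 2) u v" for u v
    by (intro competition_solution.intro competition_solution_axioms.intro constants assms(1)
        \<rho>_def M k_ge that)
  moreover have "B / 2 > 0"
    using constants by (simp add: competition_constants_def)
  ultimately show ?thesis
    by (intro exI[of _ 1] exI[of _ "B / 2"]) (auto intro: competition_solution.uniform_convergence)
qed

end
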